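(* The function $\mathcal{I}$ is strictly increasing on $[0,1]\cap\mathbb{Q}$: for all rationals $0\le x<y\le1$, $\mathcal{I}(x)<\mathcal{I}(y)$.
   Context: For $x\in\mathbb{R}$ let $\{x\}=x-\lfloor x\rfloor$. The interrobang function $\mathcal{I}\colon[0,1]\cap\mathbb{Q}\to\mathbb{R}$ is defined recursively by $\mathcal{I}(0)=0$; $\mathcal{I}(x)=4^{-\lfloor1/x\rfloor}\big(1-2\,\mathcal{I}(\{1/x\})\big)$ if $0<x\le\tfrac12$; and $\mathcal{I}(x)=\tfrac38-\tfrac34\,\mathcal{I}(1/x-1)-\tfrac12\,\mathcal{I}(1-x)$ if $\tfrac12<x\le1$. The recursion is well founded: with the height $a/b\mapsto|a|+|b|$ ($\gcd(a,b)=1$), every argument on the right-hand side has strictly smaller height than $x$, so $\mathcal{I}$ is uniquely defined. *)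

theory Defs
  imports Complex_Main
begin

text \<open>We define it as the unique function satisfying the recursive equations on [0,1];
  outside [0,1] the value is fixed to 0 so that the function is unique.\<close>

definition interrobang_eqs :: "(rat \<Rightarrow> real) \<Rightarrow> bool" where
  "interrobang_eqs f \<longleftrightarrow>
     f 0 = 0 \<and>
     (\<forall>x. 0 < x \<and> x \<le> 1/2 \<longrightarrow>
        f x = (1/4) ^ nat \<lfloor>1/x\<rfloor> * (1 - 2 * f (frac (1/x)))) \<and>
     (\<forall>x. 1/2 < x \<and> x \<le> 1 \<longrightarrow>
        f x = 3/8 - 3/4 * f (1/x - 1) - 1/2 * f (1 - x)) \<and>
     (\<forall>x. x < 0 \<or> 1 < x \<longrightarrow> f x = 0)"

definition interrobang :: "rat \<Rightarrow> real" where
  "interrobang = (THE f. interrobang_eqs f)"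

end

theory Submission imports Defs begin

text \<open>The recursion only ever calls \<open>\<I>\<close> at arguments of smaller height, and on each
  of the two branches \<open>\<I>\<close> is an order-reversing affine image of \<open>\<I>\<close> at those arguments:
  \<open>x \<mapsto> frac (1/x)\<close> is decreasing as long as \<open>\<lfloor>1/x\<rfloor>\<close> is constant, and both
  \<open>x \<mapsto> 1/x - 1\<close> and \<open>x \<mapsto> 1 - x\<close> are decreasing. Together with the bounds
  \<open>\<I> \<le> 1/16\<close> on \<open>[0, 1/2]\<close>, \<open>\<I> > 1/16\<close> on \<open>(1/2, 1]\<close> and \<open>0 \<le> \<I> < 3/8\<close> on
  \<open>[0, 1)\<close>, which control the jumps of \<open>\<lfloor>1/x\<rfloor>\<close>, induction on the sum of the heights
  of \<open>x\<close> and \<open>y\<close> gives strict monotonicity.\<close>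

definition rat_height :: "rat \<Rightarrow> nat" where
  "rat_height x = nat \<bar>fst (quotient_of x)\<bar> + nat (snd (quotient_of x))"

lemma rat_height_le_fraction:
  assumes q: "q > 0" and x: "x = of_int p / of_int q"
  shows "rat_height x \<le> nat \<bar>p\<bar> + nat q"
proof -
  obtain a b where ab: "quotient_of x = (a, b)" by (cases "quotient_of x")
  have b: "b > 0" using ab quotient_of_denom_pos by blast
  have cop: "coprime a b" using ab quotient_of_coprime by blast
  have "of_int a / of_int b = (of_int p / of_int q :: rat)"
    using ab quotient_of_div x by simp
  then have eq: "a * q = p * b"
    using b q by (simp add: frac_eq_eq) (metis of_int_eq_iff of_int_mult)
  then have "b dvd a * q" by simp
  then have "b dvd q" using cop by (metis coprime_commute coprime_dvd_mult_right_iff)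
  then obtain k where k: "q = b * k" by blast
  have k_pos: "k > 0" using k b q by (simp add: zero_less_mult_iff)
  have "p = a * k" using eq k b by (simp add: algebra_simps)
  then have "\<bar>a\<bar> \<le> \<bar>p\<bar>" using k_pos by (simp add: abs_mult mult_le_cancel_left1)
  moreover have "b \<le> q" using k k_pos b by (simp add: mult_le_cancel_left1)
  ultimately show ?thesis using ab by (simp add: rat_height_def)
qed

lemma rat_height_pos_obtain:
  assumes "x > 0"
  obtains a b where "x = of_int a / of_int b" "a > 0" "b > 0" "rat_height x = nat a + nat b"
proof -
  obtain a b where ab: "quotient_of x = (a, b)" by (cases "quotient_of x")
  have b: "b > 0" using ab quotient_of_denom_pos by blast
  have x: "x = of_int a / of_int b" using ab quotient_of_div by blast
  have "a > 0" using assms x b by (simp add: zero_less_divide_iff)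
  then show ?thesis using that x b ab by (simp add: rat_height_def)
qed

lemma rat_height_frac_inverse_less:
  assumes "0 < x" "x \<le> 1/2"
  shows "rat_height (frac (1/x)) < rat_height x"
proof -
  obtain a b where x: "x = of_int a / of_int b" and a: "a > 0" and b: "b > 0"
    and h: "rat_height x = nat a + nat b" using rat_height_pos_obtain assms(1) by blast
  have "2 * a \<le> b" using assms(2) x a b by (simp add: divide_le_eq le_divide_eq field_simps)
  have "frac (1/x) = of_int (b mod a) / of_int a"
  proof -
    have inverse: "1/x = of_int b / of_int a" using x by simp
    have "(of_int b :: rat) = of_int a * of_int (b div a) + of_int (b mod a)"
      by (metis div_mult_mod_eq mult.commute of_int_add of_int_mult)
    then show ?thesis
      unfolding inverse frac_def floor_divide_of_int_eq using a by (simp add: field_simps)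
  qed
  then have "rat_height (frac (1/x)) \<le> nat \<bar>b mod a\<bar> + nat a"
    using a rat_height_le_fraction by blast
  moreover have "0 \<le> b mod a" "b mod a < a" using a by simp_all
  ultimately show ?thesis using h \<open>2 * a \<le> b\<close> by simp
qed

lemma rat_height_inverse_minus_one_less:
  assumes "1/2 < x" "x \<le> 1"
  shows "rat_height (1/x - 1) < rat_height x"
proof -
  obtain a b where x: "x = of_int a / of_int b" and a: "a > 0" and b: "b > 0"
    and h: "rat_height x = nat a + nat b"
  proof (rule rat_height_pos_obtain)
    show "0 < x" using assms(1) by linarith
  qed
  have "a \<le> b" using assms(2) x a b by (simp add: divide_le_eq)
  have "1/x - 1 = of_int (b - a) / of_int a" using x a by (simp add: field_simps)
  then have "rat_height (1/x - 1) \<le> nat \<bar>b - a\<bar> + nat a"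
    using a rat_height_le_fraction by blast
  then show ?thesis using h a b \<open>a \<le> b\<close> by simp
qed

lemma rat_height_one_minus_less:
  assumes "1/2 < x" "x \<le> 1"
  shows "rat_height (1 - x) < rat_height x"
proof -
  obtain a b where x: "x = of_int a / of_int b" and a: "a > 0" and b: "b > 0"
    and h: "rat_height x = nat a + nat b"
  proof (rule rat_height_pos_obtain)
    show "0 < x" using assms(1) by linarith
  qed
  have "a \<le> b" using assms(2) x a b by (simp add: divide_le_eq)
  have "b < 2 * a" using assms(1) x a b by (simp add: less_divide_eq field_simps)
  have "1 - x = of_int (b - a) / of_int b" using x b by (simp add: field_simps)
  then have "rat_height (1 - x) \<le> nat \<bar>b - a\<bar> + nat b"
    using b rat_height_le_fraction by blast
  then show ?thesis using h a \<open>a \<le> b\<close> \<open>b < 2 * a\<close> by simp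
qed

function interrobang_rec :: "rat \<Rightarrow> real" where
  "interrobang_rec x =
    (if x \<le> 0 \<or> 1 < x then 0
     else if x \<le> 1/2 then (1/4) ^ nat \<lfloor>1/x\<rfloor> * (1 - 2 * interrobang_rec (frac (1/x)))
     else 3/8 - 3/4 * interrobang_rec (1/x - 1) - 1/2 * interrobang_rec (1 - x))"
  by auto
termination
  by (relation "measure rat_height")
    (auto intro: rat_height_frac_inverse_less rat_height_inverse_minus_one_less
      rat_height_one_minus_less)

declare interrobang_rec.simps [simp del]

lemma interrobang_eqs_interrobang_rec: "interrobang_eqs interrobang_rec"
  unfolding interrobang_eqs_def
  by (intro conjI allI impI; subst interrobang_rec.simps) (auto simp: not_le)

lemma interrobang_eqs_unique:
  assumes f: "interrobang_eqs f" and g: "interrobang_eqs g"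
  shows "f x = g x"
proof (induction x rule: measure_induct_rule[of rat_height])
  case (less x)
  consider "x < 0 \<or> 1 < x" | "x = 0" | "0 < x" "x \<le> 1/2" | "1/2 < x" "x \<le> 1"
    by linarith
  then show ?case
  proof cases
    case 3
    then have "f (frac (1/x)) = g (frac (1/x))"
      using less rat_height_frac_inverse_less by blast
    with 3 f g show ?thesis unfolding interrobang_eqs_def by simp
  next
    case 4
    then have "f (1/x - 1) = g (1/x - 1)" "f (1 - x) = g (1 - x)"
      using less rat_height_inverse_minus_one_less rat_height_one_minus_less by blast+
    with 4 f g show ?thesis unfolding interrobang_eqs_def by simp
  qed (use f g in \<open>auto simp: interrobang_eqs_def\<close>)
qed

lemma interrobang_eqs_interrobang: "interrobang_eqs interrobang"
proof -
  have "\<exists>!f. interrobang_eqs f"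
    using interrobang_eqs_interrobang_rec interrobang_eqs_unique by blast
  then show ?thesis unfolding interrobang_def by (rule theI')
qed

lemma interrobang_zero: "interrobang 0 = 0"
  using interrobang_eqs_interrobang by (simp add: interrobang_eqs_def)

lemma interrobang_le_half:
  "0 < x \<Longrightarrow> x \<le> 1/2 \<Longrightarrow>
    interrobang x = (1/4) ^ nat \<lfloor>1/x\<rfloor> * (1 - 2 * interrobang (frac (1/x)))"
  using interrobang_eqs_interrobang by (simp add: interrobang_eqs_def)

lemma interrobang_gt_half:
  "1/2 < x \<Longrightarrow> x \<le> 1 \<Longrightarrow>
    interrobang x = 3/8 - 3/4 * interrobang (1/x - 1) - 1/2 * interrobang (1 - x)"
  using interrobang_eqs_interrobang by (simp add: interrobang_eqs_def)

lemma quarter_power_floor_inverse_le: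
  fixes x :: "'a :: floor_ceiling"
  assumes "0 < x" "x \<le> 1/2"
  shows "(1/4 :: real) ^ nat \<lfloor>1/x\<rfloor> \<le> 1/16"
proof -
  have "2 \<le> 1/x" using assms by (simp add: field_simps)
  then have "2 \<le> \<lfloor>1/x\<rfloor>" by (simp add: le_floor_iff)
  then have "2 \<le> nat \<lfloor>1/x\<rfloor>" by linarith
  then have "(1/4 :: real) ^ nat \<lfloor>1/x\<rfloor> \<le> (1/4) ^ 2" by (rule power_decreasing) simp_all
  then show ?thesis by (simp add: power2_eq_square)
qed

text \<open>The bound \<open>1/16\<close> on \<open>[0, 1/2]\<close> has to be part of the induction: at \<open>v = 1 - x\<close> it is what
  keeps \<open>\<I> x\<close> nonnegative for \<open>x > 1/2\<close>.\<close>

lemma interrobang_bounds: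
  assumes "0 \<le> x" "x \<le> 1"
  shows "0 \<le> interrobang x \<and> (0 < x \<longrightarrow> 0 < interrobang x) \<and>
    (x < 1 \<longrightarrow> interrobang x < 3/8) \<and> (x \<le> 1/2 \<longrightarrow> interrobang x \<le> 1/16)"
  using assms
proof (induction x rule: measure_induct_rule[of rat_height])
  case (less x)
  consider "x = 0" | "0 < x" "x \<le> 1/2" | "1/2 < x" "x \<le> 1"
    using less.prems by linarith
  then show ?case
  proof cases
    case 1
    then show ?thesis by (simp add: interrobang_zero)
  next
    case 2
    define t where "t = frac (1/x)"
    define c where "c = (1/4 :: real) ^ nat \<lfloor>1/x\<rfloor>"
    have "0 \<le> t" "t < 1" unfolding t_def by (simp_all add: frac_lt_1)
    with 2 have t: "0 \<le> interrobang t" "interrobang t < 3/8"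
      using less.IH[of t] rat_height_frac_inverse_less unfolding t_def by auto
    have c: "0 < c" "c \<le> 1/16"
      using quarter_power_floor_inverse_le[OF 2] unfolding c_def by simp_all
    have x: "interrobang x = c * (1 - 2 * interrobang t)"
      using interrobang_le_half[OF 2] unfolding c_def t_def .
    have "0 < interrobang x" unfolding x using c t by simp
    moreover have "interrobang x \<le> c" unfolding x using c t by (simp add: mult_le_cancel_left1)
    ultimately show ?thesis using c by simp
  next
    case 3
    define u where "u = 1/x - 1"
    define v where "v = 1 - x"
    have "0 \<le> u" "u < 1" "0 \<le> v" "v \<le> 1/2" "x < 1 \<Longrightarrow> 0 < u"
      using 3 unfolding u_def v_def by (auto simp: field_simps)
    with 3 have "0 \<le> interrobang u" "interrobang u < 3/8" "x < 1 \<Longrightarrow> 0 < interrobang u"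
      and "0 \<le> interrobang v" "interrobang v \<le> 1/16"
      using less.IH[of u] less.IH[of v] rat_height_inverse_minus_one_less
        rat_height_one_minus_less unfolding u_def v_def by auto
    moreover have "interrobang x = 3/8 - 3/4 * interrobang u - 1/2 * interrobang v"
      using interrobang_gt_half[OF 3] unfolding u_def v_def .
    ultimately show ?thesis using 3 by auto
  qed
qed

lemma interrobang_nonneg: "0 \<le> x \<Longrightarrow> x \<le> 1 \<Longrightarrow> 0 \<le> interrobang x"
  using interrobang_bounds by blast

lemma interrobang_pos: "0 < x \<Longrightarrow> x \<le> 1 \<Longrightarrow> 0 < interrobang x"
  using interrobang_bounds by force

lemma interrobang_less_three_eighths: "0 \<le> x \<Longrightarrow> x < 1 \<Longrightarrow> interrobang x < 3/8"
  using interrobang_bounds by force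

lemma interrobang_le_one_sixteenth: "0 \<le> x \<Longrightarrow> x \<le> 1/2 \<Longrightarrow> interrobang x \<le> 1/16"
  using interrobang_bounds[of x] by simp

lemma interrobang_gt_one_sixteenth:
  assumes "1/2 < x" "x \<le> 1"
  shows "1/16 < interrobang x"
proof -
  have "0 \<le> 1/x - 1" "1/x - 1 < 1" "0 \<le> 1 - x" "1 - x \<le> 1/2"
    using assms by (auto simp: field_simps)
  then have "interrobang (1/x - 1) < 3/8" "interrobang (1 - x) \<le> 1/16"
    using interrobang_less_three_eighths interrobang_le_one_sixteenth by blast+
  then show ?thesis using interrobang_gt_half[OF assms] by simp
qed

lemma interrobang_less_le_half:
  assumes "0 < x" "x < y" "y \<le> 1/2"
    and IH: "\<And>s t. rat_height s + rat_height t < rat_height x + rat_height y \<Longrightarrow>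
      0 \<le> s \<Longrightarrow> s < t \<Longrightarrow> t \<le> 1 \<Longrightarrow> interrobang s < interrobang t"
  shows "interrobang x < interrobang y"
proof -
  define m n where "m = nat \<lfloor>1/x\<rfloor>" and "n = nat \<lfloor>1/y\<rfloor>"
  have x: "interrobang x = (1/4) ^ m * (1 - 2 * interrobang (frac (1/x)))"
    and y: "interrobang y = (1/4) ^ n * (1 - 2 * interrobang (frac (1/y)))"
    using interrobang_le_half assms(1-3) unfolding m_def n_def by auto
  have "1/y < 1/x" using assms(1,2) by (simp add: field_simps)
  then have floor_le: "\<lfloor>1/y\<rfloor> \<le> \<lfloor>1/x\<rfloor>" by (simp add: floor_mono)
  show ?thesis
  proof (cases "\<lfloor>1/x\<rfloor> = \<lfloor>1/y\<rfloor>")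
    case True
    with \<open>1/y < 1/x\<close> have "frac (1/y) < frac (1/x)" by (simp add: frac_def)
    moreover have "rat_height (frac (1/y)) + rat_height (frac (1/x)) < rat_height x + rat_height y"
      using rat_height_frac_inverse_less[of x] rat_height_frac_inverse_less[of y] assms(1-3)
      by simp
    ultimately have "interrobang (frac (1/y)) < interrobang (frac (1/x))"
      using IH by (simp add: frac_lt_1 less_imp_le)
    then show ?thesis unfolding x y m_def n_def True by simp
  next
    case False
    \<comment> \<open>a jump of \<open>\<lfloor>1/x\<rfloor>\<close> costs a factor \<open>1/4\<close>, while \<open>1 - 2 \<I> < 1\<close> and \<open>1 - 2 \<I> > 1/4\<close>\<close>
    moreover have "0 \<le> \<lfloor>1/y\<rfloor>" using assms(1,2) by simp
    ultimately have "n + 1 \<le> m" using floor_le unfolding m_def n_def by linarith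
    then have "(1/4 :: real) ^ m \<le> (1/4) ^ (n + 1)" by (rule power_decreasing) simp_all
    moreover have "0 \<le> interrobang (frac (1/x))"
      by (rule interrobang_nonneg) (simp_all add: frac_lt_1 less_imp_le)
    then have "interrobang x \<le> (1/4) ^ m" unfolding x by (simp add: mult_le_cancel_left1)
    moreover have "(1/4) ^ (n + 1) < interrobang y"
      unfolding y using interrobang_less_three_eighths[of "frac (1/y)"] by (simp add: frac_lt_1)
    ultimately show ?thesis by linarith
  qed
qed

lemma interrobang_less_gt_half:
  assumes x: "1/2 < x" and "x < y" and "y \<le> 1"
    and IH: "\<And>s t. rat_height s + rat_height t < rat_height x + rat_height y \<Longrightarrow>
      0 \<le> s \<Longrightarrow> s < t \<Longrightarrow> t \<le> 1 \<Longrightarrow> interrobang s < interrobang t"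
  shows "interrobang x < interrobang y"
proof -
  have y: "1/2 < y" "y \<le> 1" and "x \<le> 1" using assms(1-3) by auto
  have "interrobang (1/y - 1) < interrobang (1/x - 1)"
  proof (rule IH)
    show "rat_height (1/y - 1) + rat_height (1/x - 1) < rat_height x + rat_height y"
      using rat_height_inverse_minus_one_less[OF x \<open>x \<le> 1\<close>]
        rat_height_inverse_minus_one_less[OF y] by linarith
  qed (use assms(1-3) y in \<open>simp_all add: field_simps\<close>)
  moreover have "interrobang (1 - y) < interrobang (1 - x)"
  proof (rule IH)
    show "rat_height (1 - y) + rat_height (1 - x) < rat_height x + rat_height y"
      using rat_height_one_minus_less[OF x \<open>x \<le> 1\<close>] rat_height_one_minus_less[OF y]
      by linarith
  qed (use x assms(2) y in simp_all)
  ultimately show ?thesis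
    using interrobang_gt_half[OF x \<open>x \<le> 1\<close>] interrobang_gt_half[OF y] by simp
qed

theorem mainTheorem9:
  fixes x y :: rat
  assumes "0 \<le> x" and "x < y" and "y \<le> 1"
  shows "interrobang x < interrobang y"
  using assms
proof (induction "rat_height x + rat_height y" arbitrary: x y rule: less_induct)
  case less
  consider "x = 0" | "0 < x" "y \<le> 1/2" | "x \<le> 1/2" "1/2 < y" | "1/2 < x"
    using less.prems by force
  then show ?case
  proof cases
    case 1
    then show ?thesis using less.prems interrobang_zero interrobang_pos by simp
  next
    case 2
    show ?thesis by (rule interrobang_less_le_half[OF 2(1) less.prems(2) 2(2) less.hyps])
  next
    case 3
    then show ?thesis
      using less.prems interrobang_le_one_sixteenth interrobang_gt_one_sixteenth by fastforce
  next
    case 4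
    show ?thesis by (rule interrobang_less_gt_half[OF 4 less.prems(2,3) less.hyps])
  qed
qed

end
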